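(* For every PICOD hypergraph $\mathcal{H}$, $\beta(\mathcal{H})\ge\eta(\mathcal{H})$, where $\eta(\mathcal{H})$ is the nesting number of $\mathcal{H}$.
   Context: PICOD problem: a server holds $m$ messages $b_1,\dots,b_m\in\mathbb{F}_q$; there are $n$ clients, client $i$ having side-information $\{b_j: j\in S_i\}$, $S_i\subseteq[m]$, and request-set $R_i=[m]\setminus S_i$ (assumed non-empty); client $i$ wants any one message $b_j$ with $j\in R_i$. A PICOD scheme of length $\ell$ over $\mathbb{F}_q$ is an encoding map $\phi:\mathbb{F}_q^m\to\mathbb{F}_q^\ell$ such that for every client $i$ there is an index $j_i\in R_i$ and a function $\psi_i$ with $\psi_i(\phi(b),(b_k)_{k\in S_i})=b_{j_i}$ for all $b\in\mathbb{F}_q^m$. The PICOD hypergraph $\mathcal{H}=(\mathcal{V},\mathcal{E})$ has vertex set $[m]$ and edge set $\{R_i:i\in[n]\}$. $\beta_q(\mathcal{H})$ is the minimum length of a PICOD scheme over $\mathbb{F}_q$, and $\beta(\mathcal{H})=\min_q\beta_q(\mathcal{H})$ over all prime powers $q$. A nested collection of hyperedges of $\mathcal{H}$ of nesting length $L$ is a family $\mathcal{E}_1,\dots,\mathcal{E}_L\subseteq\mathcal{E}$ with $|\mathcal{E}_i|=2^{i-1}$ for each $i\in[L]$, such that for every $i\in[L-1]$ and every $R\in\mathcal{E}_i$ there exist non-empty edges $R',R''\in\mathcal{E}_{i+1}$ with $R'\subsetneq R$, $R''\subsetneq R$ and $R'\cap R''=\emptyset$. The nesting number $\eta(\mathcal{H})$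 is the maximum nesting length of a nested collection of hyperedges of $\mathcal{H}$. *)

theory Defs
  imports Main
begin

text \<open>PICOD problem: messages indexed by 0..<m (i.e. [m] shifted by one), clients
indexed by 0..<n, client i has side information S i and request set {..<m} - S i.\<close>

definition picod_request :: "nat \<Rightarrow> (nat \<Rightarrow> nat set) \<Rightarrow> nat \<Rightarrow> nat set" where
  "picod_request m S i = {..<m} - S i"

definition picod_scheme ::
  "nat \<Rightarrow> nat \<Rightarrow> (nat \<Rightarrow> nat set) \<Rightarrow> nat \<Rightarrow> ('a::field list \<Rightarrow> 'a list) \<Rightarrow> bool" where
  "picod_scheme m n S l phi \<longleftrightarrow>
     (\<forall>b. length b = m \<longrightarrow> length (phi b) = l) \<and>
     (\<forall>i<n. \<exists>j \<in> picod_request m S i. \<exists>psi :: 'a list \<Rightarrow> (nat \<Rightarrow> 'a) \<Rightarrow> 'a.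
        \<forall>b. length b = m \<longrightarrow> psi (phi b) (\<lambda>k. if k \<in> S i then b ! k else undefined) = b ! j)"

definition picod_beta_q :: "'a::{field,finite} itself \<Rightarrow> nat \<Rightarrow> nat \<Rightarrow> (nat \<Rightarrow> nat set) \<Rightarrow> nat" where
  "picod_beta_q _ m n S = (LEAST l. \<exists>phi :: 'a list \<Rightarrow> 'a list. picod_scheme m n S l phi)"

definition picod_edges :: "nat \<Rightarrow> nat \<Rightarrow> (nat \<Rightarrow> nat set) \<Rightarrow> nat set set" where
  "picod_edges m n S = {picod_request m S i | i. i < n}"

definition nested_collection :: "nat set set \<Rightarrow> nat \<Rightarrow> (nat \<Rightarrow> nat set set) \<Rightarrow> bool" where
  "nested_collection E L Es \<longleftrightarrow>
     (\<forall>i\<in>{1..L}. Es i \<subseteq> E \<and> card (Es i) = 2 ^ (i - 1)) \<and>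
     (\<forall>i\<in>{1..<L}. \<forall>R\<in>Es i. \<exists>R' \<in> Es (i+1). \<exists>R'' \<in> Es (i+1).
         R' \<noteq> {} \<and> R'' \<noteq> {} \<and> R' \<subset> R \<and> R'' \<subset> R \<and> R' \<inter> R'' = {})"

definition nesting_number :: "nat set set \<Rightarrow> nat" where
  "nesting_number E = Max {L. \<exists>Es. nested_collection E L Es}"

end

theory Submission
  imports Defs "HOL-Library.FuncSet"
begin

text \<open>Walk down the nested collection, starting from its top edge. Every edge R is the
request set of a client, so a scheme lets that client decode some b_j with j in R from the codeword and
the messages outside R; of the two disjoint children of R at the next level one misses j, and we
continue inside it. This yields L message indices J inside the top edge such that the codeword together
with the messages outside J determines the messages in J. Fixing the messages outside J, the encoder
is then injective on the q^L choices of the messages in J, so q^L \<le> q^l.\<close>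

definition determines_on :: "nat \<Rightarrow> ('a list \<Rightarrow> 'b) \<Rightarrow> nat set \<Rightarrow> bool" where
  "determines_on m phi J \<longleftrightarrow>
     (\<forall>b b'. length b = m \<longrightarrow> length b' = m \<longrightarrow> (\<forall>k<m. k \<notin> J \<longrightarrow> b ! k = b' ! k)
        \<longrightarrow> phi b = phi b' \<longrightarrow> b = b')"

lemma determines_on_empty: "determines_on m phi {}"
  unfolding determines_on_def by (auto intro: nth_equalityI)

lemma determines_on_insert:
  assumes "determines_on m phi J"
    and "\<And>b b'. length b = m \<Longrightarrow> length b' = m \<Longrightarrow> \<forall>k<m. k \<notin> insert j J \<longrightarrow> b ! k = b' ! k
           \<Longrightarrow> phi b = phi b' \<Longrightarrow> b ! j = b' ! j"
  shows "determines_on m phi (insert j J)"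
  unfolding determines_on_def
proof (intro allI impI)
  fix b b' :: "'a list"
  assume len: "length b = m" "length b' = m" and agree: "\<forall>k<m. k \<notin> insert j J \<longrightarrow> b ! k = b' ! k"
    and eq: "phi b = phi b'"
  then have "b ! j = b' ! j" using assms(2) by blast
  with agree have "\<forall>k<m. k \<notin> J \<longrightarrow> b ! k = b' ! k" by auto
  with assms(1) len eq show "b = b'" unfolding determines_on_def by blast
qed

lemma determines_on_card_le:
  fixes phi :: "'a::finite list \<Rightarrow> 'a list"
  assumes det: "determines_on m phi J" and J: "J \<subseteq> {..<m}"
    and len: "\<And>b. length b = m \<Longrightarrow> length (phi b) = l"
    and nontrivial: "1 < card (UNIV :: 'a set)"
  shows "card J \<le> l"
proof -
  define emb where "emb = (\<lambda>f :: nat \<Rightarrow> 'a. map (\<lambda>k. if k \<in> J then f k else undefined) [0..<m])"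
  have emb_len: "length (emb f) = m" for f
    unfolding emb_def by simp
  have emb_nth: "k < m \<Longrightarrow> emb f ! k = (if k \<in> J then f k else undefined)" for f k
    unfolding emb_def by simp
  have "inj_on (phi \<circ> emb) (PiE J (\<lambda>_. UNIV))"
  proof (rule inj_onI)
    fix f g
    assume f: "f \<in> PiE J (\<lambda>_. UNIV)" and g: "g \<in> PiE J (\<lambda>_. UNIV)"
      and "(phi \<circ> emb) f = (phi \<circ> emb) g"
    moreover have "\<forall>k<m. k \<notin> J \<longrightarrow> emb f ! k = emb g ! k"
      by (simp add: emb_nth)
    ultimately have "emb f = emb g"
      using det emb_len unfolding determines_on_def by simp
    have "f k = g k" if "k \<in> J" for k
    proof -
      have "k < m" using that J by auto
      with \<open>emb f = emb g\<close> that show ?thesis using emb_nth[of k f] emb_nth[of k g] by simp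
    qed
    then show "f = g" using f g by (auto intro: PiE_ext)
  qed
  moreover have "(phi \<circ> emb) ` PiE J (\<lambda>_. UNIV) \<subseteq> {xs. set xs \<subseteq> UNIV \<and> length xs = l}"
    using len emb_len by auto
  moreover have "finite {xs. set xs \<subseteq> (UNIV :: 'a set) \<and> length xs = l}"
    by (rule finite_lists_length_eq) simp
  ultimately have "card (PiE J (\<lambda>_. UNIV :: 'a set)) \<le> card {xs. set xs \<subseteq> (UNIV :: 'a set) \<and> length xs = l}"
    by (intro card_inj_on_le)
  moreover have "finite J" using J finite_subset by blast
  ultimately have "card (UNIV :: 'a set) ^ card J \<le> card (UNIV :: 'a set) ^ l"
    using card_lists_length_eq[of "UNIV :: 'a set" l] by (simp add: card_PiE)
  with nontrivial show ?thesis by (rule power_le_imp_le_exp)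
qed

lemma picod_edges_subset: "R \<in> picod_edges m n S \<Longrightarrow> R \<subseteq> {..<m}"
  unfolding picod_edges_def picod_request_def by auto

lemma picod_scheme_decodes:
  assumes "picod_scheme m n S l phi" and "c < n"
  obtains j where "j \<in> picod_request m S c"
    and "\<And>b b'. length b = m \<Longrightarrow> length b' = m \<Longrightarrow> \<forall>k\<in>S c. b ! k = b' ! k
           \<Longrightarrow> phi b = phi b' \<Longrightarrow> b ! j = b' ! j"
proof -
  from assms obtain j psi where j: "j \<in> picod_request m S c"
    and psi: "\<forall>b. length b = m \<longrightarrow> psi (phi b) (\<lambda>k. if k \<in> S c then b ! k else undefined) = b ! j"
    unfolding picod_scheme_def by blast
  have "b ! j = b' ! j"
    if "length b = m" "length b' = m" "\<forall>k\<in>S c. b ! k = b' ! k" "phi b = phi b'" for b b'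
  proof -
    have side: "(\<lambda>k. if k \<in> S c then b ! k else undefined) = (\<lambda>k. if k \<in> S c then b' ! k else undefined)"
      using that(3) by auto
    have "b ! j = psi (phi b) (\<lambda>k. if k \<in> S c then b ! k else undefined)" using psi that(1) by simp
    also have "\<dots> = psi (phi b') (\<lambda>k. if k \<in> S c then b' ! k else undefined)"
      using that(4) side by simp
    also have "\<dots> = b' ! j" using psi that(2) by simp
    finally show ?thesis .
  qed
  with j show thesis using that by blast
qed

lemma nested_collection_child_avoiding:
  assumes "nested_collection E L Es" and "i \<in> {1..<L}" and "R \<in> Es i"
  obtains R' where "R' \<in> Es (i + 1)" "R' \<subset> R" "j \<notin> R'"
proof -
  from assms(1) have "\<forall>i\<in>{1..<L}. \<forall>R\<in>Es i. \<exists>R' \<in> Es (i+1). \<exists>R'' \<in> Es (i+1).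
      R' \<noteq> {} \<and> R'' \<noteq> {} \<and> R' \<subset> R \<and> R'' \<subset> R \<and> R' \<inter> R'' = {}"
    unfolding nested_collection_def by (rule conjunct2)
  then have "\<exists>R' \<in> Es (i+1). \<exists>R'' \<in> Es (i+1).
      R' \<noteq> {} \<and> R'' \<noteq> {} \<and> R' \<subset> R \<and> R'' \<subset> R \<and> R' \<inter> R'' = {}"
    using assms(2,3) by blast
  then obtain R' R'' where R': "R' \<in> Es (i + 1)" "R' \<subset> R"
      and R'': "R'' \<in> Es (i + 1)" "R'' \<subset> R" and disjoint: "R' \<inter> R'' = {}"
    by blast
  show thesis
  proof (cases "j \<in> R'")
    case True
    with disjoint have "j \<notin> R''" by blast
    with R'' show thesis by (rule that)
  next
    case False
    with R' show thesis by (rule that)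
  qed
qed

lemma nested_collection_edge:
  "nested_collection E L Es \<Longrightarrow> i \<in> {1..L} \<Longrightarrow> R \<in> Es i \<Longrightarrow> R \<in> E"
  unfolding nested_collection_def by (meson subsetD)

lemma picod_scheme_determines_nested:
  assumes sch: "picod_scheme m n S l phi" and S: "\<forall>i<n. S i \<subseteq> {..<m}"
    and nc: "nested_collection (picod_edges m n S) L Es"
  shows "i + d = L + 1 \<Longrightarrow> 1 \<le> i \<Longrightarrow> R \<in> Es i \<Longrightarrow>
    \<exists>J \<subseteq> R. card J = d \<and> determines_on m phi J"
proof (induction d arbitrary: i R)
  case 0
  show ?case using determines_on_empty by (intro exI[of _ "{}"]) simp
next
  case (Suc d)
  then have "R \<in> picod_edges m n S" using nested_collection_edge[OF nc, of i R] by simp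
  then obtain c where c: "c < n" "R = picod_request m S c"
    unfolding picod_edges_def by blast
  obtain j where j: "j \<in> R"
    and decode: "\<And>b b'. length b = m \<Longrightarrow> length b' = m \<Longrightarrow> \<forall>k\<in>S c. b ! k = b' ! k
           \<Longrightarrow> phi b = phi b' \<Longrightarrow> b ! j = b' ! j"
    using picod_scheme_decodes[OF sch c(1)] c(2) by blast
  have "\<exists>J' \<subseteq> R. j \<notin> J' \<and> card J' = d \<and> determines_on m phi J'"
  proof (cases "d = 0")
    case True
    then show ?thesis using determines_on_empty by (intro exI[of _ "{}"]) simp
  next
    case False
    with Suc.prems have "i \<in> {1..<L}" by auto
    then obtain R' where R': "R' \<in> Es (i + 1)" "R' \<subset> R" "j \<notin> R'"
      using nested_collection_child_avoiding[OF nc _ Suc.prems(3)] by blast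
    moreover obtain J' where "J' \<subseteq> R'" "card J' = d" "determines_on m phi J'"
      using Suc.IH[of "i + 1" R'] Suc.prems R'(1) by auto
    ultimately show ?thesis by (intro exI[of _ J']) auto
  qed
  then obtain J' where J': "J' \<subseteq> R" "j \<notin> J'" "card J' = d" "determines_on m phi J'"
    by blast
  have "finite J'"
    using finite_subset[OF J'(1)] c(2) unfolding picod_request_def by simp
  have side_info_outside: "k < m \<and> k \<notin> insert j J'" if "k \<in> S c" for k
  proof -
    have "k \<notin> R" using that c(2) unfolding picod_request_def by simp
    with j J'(1) S c(1) that show ?thesis by blast
  qed
  have "determines_on m phi (insert j J')"
  proof (rule determines_on_insert[OF J'(4)])
    fix b b' :: "'a list"
    assume len: "length b = m" "length b' = m"
      and agree: "\<forall>k<m. k \<notin> insert j J' \<longrightarrow> b ! k = b' ! k" and eq: "phi b = phi b'"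
    from agree side_info_outside have "\<forall>k\<in>S c. b ! k = b' ! k" by blast
    then show "b ! j = b' ! j" using decode[OF len _ eq] by blast
  qed
  with J' j \<open>finite J'\<close> show ?case by (intro exI[of _ "insert j J'"]) auto
qed

lemma picod_scheme_length_ge_nesting:
  fixes phi :: "'a::{field,finite} list \<Rightarrow> 'a list"
  assumes sch: "picod_scheme m n S l phi" and S: "\<forall>i<n. S i \<subseteq> {..<m}"
    and nc: "nested_collection (picod_edges m n S) L Es"
  shows "L \<le> l"
proof (cases "L = 0")
  case False
  then have "card (Es 1) = 1" using nc unfolding nested_collection_def by auto
  then obtain R where R: "R \<in> Es 1" by (metis card_1_singletonE insertI1)
  then have "R \<subseteq> {..<m}"
    using nested_collection_edge[OF nc _ R] False picod_edges_subset by simp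
  obtain J where J: "J \<subseteq> R" "card J = L" "determines_on m phi J"
    using picod_scheme_determines_nested[OF sch S nc, of 1 L R] R by auto
  have "card J \<le> l"
  proof (rule determines_on_card_le[OF J(3)])
    show "J \<subseteq> {..<m}" using J(1) \<open>R \<subseteq> {..<m}\<close> by blast
    show "length (phi b) = l" if "length b = m" for b
      using sch that unfolding picod_scheme_def by blast
    show "1 < card (UNIV :: 'a set)"
      using card_mono[of UNIV "{0 :: 'a, 1}"] by simp
  qed
  with J(2) show ?thesis by simp
qed simp

lemma picod_scheme_identity:
  assumes "\<forall>i<n. picod_request m S i \<noteq> {}"
  shows "picod_scheme m n S m (\<lambda>b :: 'a::field list. b)"
  unfolding picod_scheme_def
proof (intro conjI allI impI)
  fix i assume "i < n"
  then obtain j where "j \<in> picod_request m S i" using assms by auto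
  then show "\<exists>j\<in>picod_request m S i. \<exists>psi :: 'a list \<Rightarrow> (nat \<Rightarrow> 'a) \<Rightarrow> 'a.
      \<forall>b. length b = m \<longrightarrow> psi b (\<lambda>k. if k \<in> S i then b ! k else undefined) = b ! j"
    by (intro bexI[of _ j] exI[of _ "\<lambda>c _. c ! j"]) auto
qed simp

lemma picod_beta_q_attained:
  assumes "\<exists>l. \<exists>phi :: 'a list \<Rightarrow> 'a list. picod_scheme m n S l phi"
  shows "\<exists>phi :: 'a::{field,finite} list \<Rightarrow> 'a list. picod_scheme m n S (picod_beta_q TYPE('a) m n S) phi"
  unfolding picod_beta_q_def using assms by (rule LeastI_ex)

lemma nested_collection_0: "nested_collection E 0 Es"
  unfolding nested_collection_def by simp

lemma nesting_number_le:
  assumes "\<And>L Es. nested_collection E L Es \<Longrightarrow> L \<le> B"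
  shows "nesting_number E \<le> B"
  unfolding nesting_number_def
proof (rule Max.boundedI)
  have "{L. \<exists>Es. nested_collection E L Es} \<subseteq> {..B}"
    using assms by blast
  then show "finite {L. \<exists>Es. nested_collection E L Es}"
    by (rule finite_subset) simp
  show "{L. \<exists>Es. nested_collection E L Es} \<noteq> {}"
    using nested_collection_0 by blast
qed (use assms in blast)

theorem theorem2:
  fixes m n :: nat and S :: "nat \<Rightarrow> nat set"
  assumes "\<forall>i<n. S i \<subseteq> {..<m}"
    and "\<forall>i<n. picod_request m S i \<noteq> {}"
  shows "nesting_number (picod_edges m n S) \<le> picod_beta_q TYPE('a::{field,finite}) m n S"
proof (rule nesting_number_le)
  obtain phi :: "'a list \<Rightarrow> 'a list"
    where "picod_scheme m n S (picod_beta_q TYPE('a) m n S) phi"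
    using picod_beta_q_attained picod_scheme_identity[OF assms(2)] by blast
  then show "L \<le> picod_beta_q TYPE('a) m n S"
    if "nested_collection (picod_edges m n S) L Es" for L Es
    using picod_scheme_length_ge_nesting assms(1) that by blast
qed

end
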